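(* The set of Lebesgue integrable functions on $[0,1]$ which are not equivalent (equal almost everywhere) to a Riemann integrable function on any nondegenerate subinterval of $[0,1]$ is strongly $\mathfrak{c}$-algebrable (with respect to pointwise operations on functions modulo a.e. equality).
   Context: $\mathfrak{c}$ is the cardinality of the continuum. A subset $S$ of a commutative algebra is strongly $\kappa$-algebrable if there is a set $Z=\{z_\alpha:\alpha<\kappa\}$ such that for every nonzero polynomial $P$ without constant term and distinct $z_{\alpha_1},\dots,z_{\alpha_n}\in Z$, $P(z_{\alpha_1},\dots,z_{\alpha_n})\neq0$, and the algebra generated by $Z$ is contained in $S\cup\{0\}$. *)

theory Defs
  imports "HOL-Analysis.Analysis"
begin

definition riemann_integrable_on :: "(real \<Rightarrow> real) \<Rightarrow> real \<Rightarrow> real \<Rightarrow> bool" where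
  "riemann_integrable_on f a b \<longleftrightarrow>
     (\<exists>I::real. \<forall>\<epsilon>>0. \<exists>\<delta>>0. \<forall>D. D tagged_division_of {a..b} \<and> (\<forall>(x,K)\<in>D. Henstock_Kurzweil_Integration.content K < \<delta>) \<longrightarrow>
        \<bar>(\<Sum>(x,K)\<in>D. Henstock_Kurzweil_Integration.content K * f x) - I\<bar> < \<epsilon>)"

definition nowhere_riemann_L1 :: "(real \<Rightarrow> real) set" where
  "nowhere_riemann_L1 = {f. integrable (lebesgue_on {0..1}) f \<and>
     (\<forall>a b. 0 \<le> a \<and> a < b \<and> b \<le> 1 \<longrightarrow>
        \<not> (\<exists>g. riemann_integrable_on g a b \<and> (AE x in lebesgue_on {a..b}. f x = g x)))}"

text \<open>Multivariate polynomials without constant term in n variables: a finite set M of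
exponent vectors (functions nat => nat vanishing from n on), none of them the zero vector,
with coefficients c.\<close>
definition mpoly_eval :: "(nat \<Rightarrow> nat) set \<Rightarrow> ((nat \<Rightarrow> nat) \<Rightarrow> real) \<Rightarrow> real list \<Rightarrow> real" where
  "mpoly_eval M c xs = (\<Sum>e\<in>M. c e * (\<Prod>i<length xs. (xs ! i) ^ (e i)))"

definition nonconst_poly :: "nat \<Rightarrow> (nat \<Rightarrow> nat) set \<Rightarrow> ((nat \<Rightarrow> nat) \<Rightarrow> real) \<Rightarrow> bool" where
  "nonconst_poly n M c \<longleftrightarrow> finite M \<and> (\<forall>e\<in>M. e \<noteq> (\<lambda>_. 0) \<and> (\<forall>i\<ge>n. e i = 0))
      \<and> (\<exists>e\<in>M. c e \<noteq> 0)"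

text \<open>The generators are indexed by the reals (a set of cardinality continuum). For every nonzero
polynomial P without constant term and distinct indices, P(z) is nonzero (not a.e. zero),
and every element of the generated algebra lies in S or is zero; since the generated algebra
consists exactly of such P(z) (and 0), this is expressed as P(z) being in S.\<close>
definition strongly_c_algebrable_ae :: "(real \<Rightarrow> real) set \<Rightarrow> bool" where
  "strongly_c_algebrable_ae S \<longleftrightarrow>
     (\<exists>z :: real \<Rightarrow> real \<Rightarrow> real.
        \<forall>n (\<alpha>s :: real list) M c.
          length \<alpha>s = n \<and> distinct \<alpha>s \<and> nonconst_poly n M c \<longrightarrow>
            \<not> (AE t in lebesgue_on {0..1}. mpoly_eval M c (map (\<lambda>\<alpha>. z \<alpha> t) \<alpha>s) = 0)
            \<and> (\<lambda>t. mpoly_eval M c (map (\<lambda>\<alpha>. z \<alpha> t) \<alpha>s)) \<in> S)"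

end

theory Submission
  imports Defs
begin

text \<open>
  The generators are \<open>z\<^sub>\<alpha> = \<phi>\<^bsub>exp \<alpha>\<^esub> \<circ> \<rho>\<close>, where
  \<open>\<phi>\<^sub>\<beta>(r) = exp(-exp(\<beta>/r))\<close> for \<open>r > 0\<close> (and 0 otherwise), and
  \<open>\<rho>(t) = inf\<^sub>k 2\<^sup>k |t - q\<^sub>k|\<close> for an enumeration \<open>q\<^sub>k\<close> of the rationals.
  A nonzero polynomial without constant term in distinct generators is \<open>\<Phi> \<circ> \<rho>\<close> with
  \<open>\<Phi>\<close> bounded, continuous on \<open>[0,\<infinity>)\<close>, \<open>\<Phi>(0) = 0\<close>, and \<open>\<Phi> \<noteq> 0\<close> on some
  \<open>(0, r\<^sub>0)\<close>: writing \<open>x = 1/r\<close>, its monomials are \<open>exp(-\<Sum>\<^sub>i e\<^sub>i exp(\<beta>\<^sub>i x))\<close>,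
  and distinct exponent vectors give weights whose differences tend to \<open>\<plusminus>\<infinity>\<close>, so a
  single monomial dominates as \<open>x \<rightarrow> \<infinity>\<close>.

  The function \<open>\<rho>\<close> vanishes on the rationals, while \<open>{\<rho> < s}\<close> has measure at most
  \<open>4s\<close>. Hence every interval contains a set of positive measure on which \<open>\<rho>\<close> stays in a
  compact subinterval of \<open>(0, r\<^sub>0)\<close>, where \<open>\<Phi>\<close> has a fixed sign and \<open>|\<Phi>| \<ge> m > 0\<close>,
  and every subinterval contains a set of positive measure on which \<open>|\<Phi> \<circ> \<rho>| < m/2\<close>.
  For any function agreeing a.e. with \<open>\<Phi> \<circ> \<rho>\<close>, choosing tags accordingly produces, for
  every partition, two Riemann sums that differ by a fixed positive amount.
\<close>

section \<open>Sums of exponentials\<close>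

lemma filterlim_exp_mult_at_top:
  fixes c :: real assumes "c > 0"
  shows "filterlim (\<lambda>x. exp (c * x)) at_top at_top"
  by (rule filterlim_compose[OF exp_at_top])
     (rule filterlim_tendsto_pos_mult_at_top[OF tendsto_const assms filterlim_ident])

lemma tendsto_exp_mult_at_top_0:
  fixes c :: real assumes "c < 0"
  shows "((\<lambda>x. exp (c * x)) \<longlongrightarrow> 0) at_top"
proof -
  have "filterlim (\<lambda>x. (- c) * x) at_top at_top"
    using assms by (intro filterlim_tendsto_pos_mult_at_top[OF tendsto_const] filterlim_ident) auto
  then have "filterlim (\<lambda>x. c * x) at_bot at_top"
    by (simp add: filterlim_uminus_at_top)
  then show ?thesis by (rule filterlim_compose[OF exp_at_bot])
qed

lemma filterlim_sum_exp_dominant_at_top: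
  fixes b d :: "'i \<Rightarrow> real"
  assumes "finite Z" "j \<in> Z" and "b j > 0" "\<forall>i\<in>Z - {j}. b i < b j" and "d j > 0"
  shows "filterlim (\<lambda>x. \<Sum>i\<in>Z. d i * exp (b i * x)) at_top at_top"
proof -
  have factor: "(\<Sum>i\<in>Z. d i * exp (b i * x)) =
      (d j + (\<Sum>i\<in>Z - {j}. d i * exp ((b i - b j) * x))) * exp (b j * x)" for x
    using assms(1,2)
    by (simp add: sum.remove sum_distrib_right distrib_right mult.assoc left_diff_distrib
        flip: exp_add)
  have "((\<lambda>x. d j + (\<Sum>i\<in>Z - {j}. d i * exp ((b i - b j) * x))) \<longlongrightarrow> d j + 0) at_top"
    using assms(4)
    by (intro tendsto_add tendsto_const tendsto_null_sum tendsto_mult_right_zero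
        tendsto_exp_mult_at_top_0) auto
  then show ?thesis
    unfolding factor
    by (rule filterlim_tendsto_pos_mult_at_top) (use assms(3,5) filterlim_exp_mult_at_top in auto)
qed

definition exp_weight :: "real list \<Rightarrow> (nat \<Rightarrow> nat) \<Rightarrow> real \<Rightarrow> real" where
  "exp_weight bs e x = (\<Sum>i<length bs. real (e i) * exp (bs ! i * x))"

lemma exp_weight_diff_at_top:
  assumes "distinct bs" and pos: "\<forall>b\<in>set bs. b > 0" and "\<exists>i<length bs. e i \<noteq> e' i"
  shows "filterlim (\<lambda>x. exp_weight bs e x - exp_weight bs e' x) at_top at_top \<or>
         filterlim (\<lambda>x. exp_weight bs e' x - exp_weight bs e x) at_top at_top"
proof -
  define d where "d i = real (e i) - real (e' i)" for i
  define Z where "Z = {i. i < length bs \<and> d i \<noteq> 0}"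
  have "finite Z" "Z \<noteq> {}" using assms(3) by (auto simp: Z_def d_def)
  obtain j where j: "j \<in> Z" "bs ! j = Max ((\<lambda>i. bs ! i) ` Z)"
    using Max_in[of "(\<lambda>i. bs ! i) ` Z"] \<open>finite Z\<close> \<open>Z \<noteq> {}\<close> by fastforce
  have dominant: "\<forall>i\<in>Z - {j}. bs ! i < bs ! j"
  proof
    fix i assume i: "i \<in> Z - {j}"
    then have "bs ! i \<le> bs ! j" using j(2) \<open>finite Z\<close> by auto
    moreover have "bs ! i \<noteq> bs ! j"
      using i j(1) assms(1) by (auto simp: Z_def nth_eq_iff_index_eq)
    ultimately show "bs ! i < bs ! j" by simp
  qed
  have "bs ! j > 0" using j(1) pos by (auto simp: Z_def)
  have diff: "exp_weight bs e x - exp_weight bs e' x = (\<Sum>i\<in>Z. d i * exp (bs ! i * x))" for x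
  proof -
    have "exp_weight bs e x - exp_weight bs e' x = (\<Sum>i<length bs. d i * exp (bs ! i * x))"
      by (simp add: exp_weight_def d_def sum_subtractf algebra_simps)
    also have "\<dots> = (\<Sum>i\<in>Z. d i * exp (bs ! i * x))"
      by (rule sum.mono_neutral_right) (auto simp: Z_def)
    finally show ?thesis .
  qed
  have diff': "exp_weight bs e' x - exp_weight bs e x = - (\<Sum>i\<in>Z. d i * exp (bs ! i * x))" for x
    using diff[of x] by simp
  have "d j \<noteq> 0" using j(1) by (simp add: Z_def)
  then consider "d j > 0" | "- d j > 0" by linarith
  then show ?thesis
  proof cases
    case 1
    then show ?thesis
      using filterlim_sum_exp_dominant_at_top[OF \<open>finite Z\<close> j(1) \<open>bs ! j > 0\<close> dominant]
      by (simp add: diff)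
  next
    case 2
    then show ?thesis
      using filterlim_sum_exp_dominant_at_top[where d="\<lambda>i. - d i",
          OF \<open>finite Z\<close> j(1) \<open>bs ! j > 0\<close> dominant]
      by (simp add: diff' sum_negf)
  qed
qed

lemma finite_total_relation_has_least:
  assumes "finite X" "X \<noteq> {}"
    and "\<And>x y. x \<in> X \<Longrightarrow> y \<in> X \<Longrightarrow> x \<noteq> y \<Longrightarrow> R x y \<or> R y x"
    and "\<And>x y z. x \<in> X \<Longrightarrow> y \<in> X \<Longrightarrow> z \<in> X \<Longrightarrow> R x y \<Longrightarrow> R y z \<Longrightarrow> R x z"
  shows "\<exists>m\<in>X. \<forall>y\<in>X - {m}. R m y"
  using assms
proof (induction X rule: finite_ne_induct)
  case (singleton x)
  show ?case by simp
next
  case (insert x F)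
  have "\<exists>m\<in>F. \<forall>y\<in>F - {m}. R m y"
  proof (rule insert.IH)
    show "R a b \<or> R b a" if "a \<in> F" "b \<in> F" "a \<noteq> b" for a b
      using insert.prems(1) that by blast
    show "R a d" if "a \<in> F" "b \<in> F" "d \<in> F" "R a b" "R b d" for a b d
      using insert.prems(2) that by blast
  qed
  then obtain m where m: "m \<in> F" "\<forall>y\<in>F - {m}. R m y" by blast
  have "x \<noteq> m" using insert.hyps m(1) by blast
  then have "R x m \<or> R m x" using insert.prems(1)[of x m] m(1) by blast
  then show ?case
  proof
    assume "R x m"
    have "R x y" if "y \<in> F" for y
      using m \<open>R x m\<close> insert.prems(2)[of x m y] that by (cases "y = m") auto
    then show ?thesis by auto
  next
    assume "R m x"
    then show ?thesis using m by auto
  qed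
qed

lemma exp_weight_slowest_exists:
  assumes "distinct bs" "\<forall>b\<in>set bs. b > 0" "finite M" "M \<noteq> {}"
    and vanish: "\<forall>e\<in>M. \<forall>i\<ge>length bs. e i = 0"
  obtains m where "m \<in> M"
    "\<forall>e\<in>M - {m}. filterlim (\<lambda>x. exp_weight bs e x - exp_weight bs m x) at_top at_top"
proof -
  define R where "R e e' \<longleftrightarrow> filterlim (\<lambda>x. exp_weight bs e' x - exp_weight bs e x) at_top at_top"
    for e e'
  have "\<exists>m\<in>M. \<forall>e\<in>M - {m}. R m e"
  proof (rule finite_total_relation_has_least[OF assms(3,4)])
    fix e e' assume "e \<in> M" "e' \<in> M" "e \<noteq> e'"
    then have "\<exists>i<length bs. e' i \<noteq> e i"
      using vanish by (auto simp: fun_eq_iff) (metis not_le)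
    then show "R e e' \<or> R e' e"
      using exp_weight_diff_at_top[OF assms(1,2)] by (auto simp: R_def)
  next
    fix e e' e'' assume "R e e'" "R e' e''"
    then have "filterlim (\<lambda>x. (exp_weight bs e'' x - exp_weight bs e' x)
        + (exp_weight bs e' x - exp_weight bs e x)) at_top at_top"
      unfolding R_def by (rule filterlim_at_top_add_at_top[rotated])
    then show "R e e''" by (simp add: R_def)
  qed
  then show ?thesis using that by (auto simp: R_def)
qed

lemma eventually_sum_exp_weight_nonzero:
  assumes "distinct bs" "\<forall>b\<in>set bs. b > 0"
    and "finite M" "\<forall>e\<in>M. \<forall>i\<ge>length bs. e i = 0" "\<exists>e\<in>M. c e \<noteq> 0"
  shows "eventually (\<lambda>x. (\<Sum>e\<in>M. c e * exp (- exp_weight bs e x)) \<noteq> 0) at_top"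
proof -
  define M' where "M' = {e\<in>M. c e \<noteq> 0}"
  have "finite M'" "M' \<noteq> {}" "\<forall>e\<in>M'. \<forall>i\<ge>length bs. e i = 0"
    using assms(3-5) by (auto simp: M'_def)
  then obtain m where m: "m \<in> M'"
    "\<forall>e\<in>M' - {m}. filterlim (\<lambda>x. exp_weight bs e x - exp_weight bs m x) at_top at_top"
    by (rule exp_weight_slowest_exists[OF assms(1,2)])
  \<comment> \<open>The term whose weight grows slowest dominates all others.\<close>
  have "((\<lambda>x. c m + (\<Sum>e\<in>M' - {m}. c e * exp (- (exp_weight bs e x - exp_weight bs m x))))
      \<longlongrightarrow> c m + 0) at_top"
  proof (intro tendsto_add tendsto_const tendsto_null_sum tendsto_mult_right_zero)
    fix e assume "e \<in> M' - {m}"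
    then have "filterlim (\<lambda>x. - (exp_weight bs e x - exp_weight bs m x)) at_bot at_top"
      using m(2) by (simp add: filterlim_uminus_at_top)
    then show "((\<lambda>x. exp (- (exp_weight bs e x - exp_weight bs m x))) \<longlongrightarrow> 0) at_top"
      by (rule filterlim_compose[OF exp_at_bot])
  qed
  moreover have "c m \<noteq> 0" using m(1) by (simp add: M'_def)
  ultimately have "eventually (\<lambda>x. c m + (\<Sum>e\<in>M' - {m}.
      c e * exp (- (exp_weight bs e x - exp_weight bs m x))) \<noteq> 0) at_top"
    using tendsto_imp_eventually_ne by fastforce
  moreover have "(\<Sum>e\<in>M. c e * exp (- exp_weight bs e x)) = exp (- exp_weight bs m x) *
      (c m + (\<Sum>e\<in>M' - {m}. c e * exp (- (exp_weight bs e x - exp_weight bs m x))))" for x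
  proof -
    have "(\<Sum>e\<in>M. c e * exp (- exp_weight bs e x)) = (\<Sum>e\<in>M'. c e * exp (- exp_weight bs e x))"
      using assms(3) by (intro sum.mono_neutral_right) (auto simp: M'_def)
    also have "\<dots> = c m * exp (- exp_weight bs m x) + (\<Sum>e\<in>M' - {m}. c e * exp (- exp_weight bs e x))"
      using \<open>finite M'\<close> m(1) by (simp add: sum.remove)
    also have "(\<Sum>e\<in>M' - {m}. c e * exp (- exp_weight bs e x)) = exp (- exp_weight bs m x) *
        (\<Sum>e\<in>M' - {m}. c e * exp (- (exp_weight bs e x - exp_weight bs m x)))"
      by (simp add: sum_distrib_left mult.left_commute flip: exp_add)
    finally show ?thesis by (simp add: algebra_simps)
  qed
  ultimately show ?thesis by (simp add: eventually_mono)
qed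

section \<open>Polynomials in flat functions\<close>

definition exp_flat :: "real \<Rightarrow> real \<Rightarrow> real" where
  "exp_flat \<beta> r = (if 0 < r then exp (- exp (\<beta> / r)) else 0)"

lemma exp_flat_nonneg: "0 \<le> exp_flat \<beta> r"
  by (simp add: exp_flat_def)

lemma exp_flat_le_1: "exp_flat \<beta> r \<le> 1"
  by (simp add: exp_flat_def)

lemma tendsto_exp_exp_at_right_0:
  fixes \<beta> :: real assumes "\<beta> > 0"
  shows "((\<lambda>r. exp (- exp (\<beta> / r))) \<longlongrightarrow> 0) (at_right 0)"
proof -
  have "filterlim (\<lambda>r. \<beta> * inverse r) at_top (at_right 0)"
    by (intro filterlim_tendsto_pos_mult_at_top[OF tendsto_const assms] filterlim_inverse_at_top_right)
  then have "filterlim (\<lambda>r. exp (\<beta> / r)) at_top (at_right 0)"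
    unfolding divide_inverse by (rule filterlim_compose[OF exp_at_top])
  then have "filterlim (\<lambda>r. - exp (\<beta> / r)) at_bot (at_right 0)"
    by (simp add: filterlim_uminus_at_top)
  then show ?thesis by (rule filterlim_compose[OF exp_at_bot])
qed

lemma continuous_on_exp_flat:
  assumes "\<beta> > 0" shows "continuous_on UNIV (exp_flat \<beta>)"
  unfolding continuous_on_eq_continuous_at[OF open_UNIV]
proof
  fix x :: real
  consider "x < 0" | "x = 0" | "x > 0" by linarith
  then show "isCont (exp_flat \<beta>) x"
  proof cases
    case 1
    have "eventually (\<lambda>y. y \<in> {..<0}) (nhds x)" using 1 by (intro eventually_nhds_in_open) auto
    then have "\<forall>\<^sub>F y in nhds x. 0 = exp_flat \<beta> y"
      by eventually_elim (auto simp: exp_flat_def)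
    then show ?thesis using isCont_cong by force
  next
    case 2
    have "(exp_flat \<beta> \<longlongrightarrow> 0) (at_right 0)"
      using tendsto_exp_exp_at_right_0[OF assms]
      by (rule Lim_transform_eventually)
         (auto simp: exp_flat_def eventually_at_right_field intro: exI[of _ 1])
    moreover have "(exp_flat \<beta> \<longlongrightarrow> 0) (at_left 0)"
      by (rule Lim_transform_eventually[OF tendsto_const])
         (auto simp: exp_flat_def eventually_at_left_field intro!: exI[of _ "-1"])
    ultimately show ?thesis
      using 2 by (simp add: isCont_def filterlim_split_at exp_flat_def)
  next
    case 3
    have "eventually (\<lambda>y. y \<in> {0<..}) (nhds x)" using 3 by (intro eventually_nhds_in_open) auto
    then have "\<forall>\<^sub>F y in nhds x. exp (- exp (\<beta> / y)) = exp_flat \<beta> y"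
      by eventually_elim (auto simp: exp_flat_def)
    moreover have "isCont (\<lambda>y. exp (- exp (\<beta> / y))) x" using 3 by (intro continuous_intros) auto
    ultimately show ?thesis by (simp add: isCont_cong)
  qed
qed

lemma mpoly_eval_zeros:
  assumes "\<forall>e\<in>M. e \<noteq> (\<lambda>_. 0) \<and> (\<forall>i\<ge>length xs. e i = 0)" and "\<forall>x\<in>set xs. x = 0"
  shows "mpoly_eval M c xs = 0"
  unfolding mpoly_eval_def
proof (rule sum.neutral, rule ballI)
  fix e assume "e \<in> M"
  then obtain j where "e j \<noteq> 0" "j < length xs"
    using assms(1) by (metis not_le)
  then have "(xs ! j) ^ e j = 0" using assms(2) by (simp add: nth_mem)
  then show "c e * (\<Prod>i<length xs. (xs ! i) ^ e i) = 0"
    using \<open>j < length xs\<close> by (simp add: prod_zero_iff) blast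
qed

lemma abs_mpoly_eval_le:
  assumes "\<forall>x\<in>set xs. 0 \<le> x \<and> x \<le> 1"
  shows "\<bar>mpoly_eval M c xs\<bar> \<le> (\<Sum>e\<in>M. \<bar>c e\<bar>)"
proof -
  have "\<bar>\<Prod>i<length xs. (xs ! i) ^ e i\<bar> \<le> 1" for e
    using assms by (auto simp: abs_prod intro!: prod_le_1 power_le_one)
  then have "\<bar>c e * (\<Prod>i<length xs. (xs ! i) ^ e i)\<bar> \<le> \<bar>c e\<bar>" for e
    by (simp add: abs_mult mult_left_le)
  then show ?thesis
    unfolding mpoly_eval_def by (rule order_trans[OF sum_abs sum_mono])
qed

definition flat_poly :: "real list \<Rightarrow> (nat \<Rightarrow> nat) set \<Rightarrow> ((nat \<Rightarrow> nat) \<Rightarrow> real) \<Rightarrow> real \<Rightarrow> real"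
  where "flat_poly bs M c r = mpoly_eval M c (map (\<lambda>\<beta>. exp_flat \<beta> r) bs)"

lemma flat_poly_eq_sum_exp_weight:
  assumes "0 < r"
  shows "flat_poly bs M c r = (\<Sum>e\<in>M. c e * exp (- exp_weight bs e (inverse r)))"
proof -
  have "(\<Prod>i<length bs. exp_flat (bs ! i) r ^ e i) = exp (- exp_weight bs e (inverse r))" for e
    using assms
    by (simp add: exp_flat_def exp_weight_def exp_sum divide_inverse mult.commute
        flip: sum_negf exp_of_nat_mult)
  then show ?thesis by (simp add: flat_poly_def mpoly_eval_def)
qed

lemma eventually_flat_poly_nonzero:
  assumes "distinct bs" "\<forall>b\<in>set bs. b > 0"
    and "finite M" "\<forall>e\<in>M. \<forall>i\<ge>length bs. e i = 0" "\<exists>e\<in>M. c e \<noteq> 0"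
  shows "eventually (\<lambda>r. flat_poly bs M c r \<noteq> 0) (at_right 0)"
  unfolding eventually_at_right_to_top
  using eventually_sum_exp_weight_nonzero[OF assms] eventually_gt_at_top[of 0]
  by eventually_elim (simp add: flat_poly_eq_sum_exp_weight)

lemma continuous_on_flat_poly:
  assumes "\<forall>b\<in>set bs. b > 0"
  shows "continuous_on UNIV (flat_poly bs M c)"
proof -
  have "flat_poly bs M c = (\<lambda>r. \<Sum>e\<in>M. c e * (\<Prod>i<length bs. exp_flat (bs ! i) r ^ e i))"
    by (simp add: fun_eq_iff flat_poly_def mpoly_eval_def)
  then show ?thesis
    using assms by (simp, intro continuous_intros continuous_on_exp_flat) auto
qed

lemma flat_poly_0:
  assumes "\<forall>e\<in>M. e \<noteq> (\<lambda>_. 0) \<and> (\<forall>i\<ge>length bs. e i = 0)"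
  shows "flat_poly bs M c 0 = 0"
  unfolding flat_poly_def using assms by (intro mpoly_eval_zeros) (auto simp: exp_flat_def)

lemma abs_flat_poly_le: "\<bar>flat_poly bs M c r\<bar> \<le> (\<Sum>e\<in>M. \<bar>c e\<bar>)"
  unfolding flat_poly_def by (rule abs_mpoly_eval_le) (auto simp: exp_flat_nonneg exp_flat_le_1)

section \<open>A criterion for Riemann non-integrability\<close>

lemma AE_lebesgue_on_obtain_in:
  assumes "AE x in lebesgue_on S. P x" and "S \<in> sets borel"
    and "E \<in> sets borel" "E \<subseteq> S" "measure lborel E > 0"
  obtains x where "x \<in> E" "P x"
proof -
  have "E \<notin> null_sets lborel"
    using assms(5) by (auto simp: measure_def)
  then have "\<not> (AE x in lborel. x \<notin> E)"
    using assms(3) by (simp add: AE_iff_null_sets)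
  moreover have "AE x in lborel. x \<in> S \<longrightarrow> P x"
    using assms(1,2) by (simp add: AE_restrict_space_iff AE_completion_iff)
  ultimately have "\<exists>x\<in>E. P x"
    using assms(4) by (smt (verit, del_insts) eventually_mono subsetD)
  then show ?thesis using that by blast
qed

lemma division_of_small_content_exists:
  assumes "\<delta> > 0"
  obtains d where "d division_of {a..b::real}" "\<forall>K\<in>d. measure lborel K < \<delta>"
proof -
  have "gauge (\<lambda>x. ball x (\<delta>/2))" using assms by (simp add: gauge_def)
  then obtain D where D: "D tagged_division_of cbox a b" "(\<lambda>x. ball x (\<delta>/2)) fine D"
    using fine_division_exists by blast
  have "measure lborel K < \<delta>" if xK: "(x, K) \<in> D" for x K
  proof -
    obtain u v where K: "K = cbox u v" using tagged_division_ofD(4)[OF D(1) xK] by blast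
    have sub: "K \<subseteq> ball x (\<delta>/2)" using fineD[OF D(2) xK] .
    show ?thesis
    proof (cases "u \<le> v")
      case True
      then have "dist x u < \<delta>/2" "dist x v < \<delta>/2" using K sub by auto
      then have "v - u < \<delta>" unfolding dist_real_def by arith
      then show ?thesis using K True by simp
    qed (use K assms in simp)
  qed
  then show ?thesis
    using that[of "snd ` D"] division_of_tagged_division[OF D(1)] by fastforce
qed

lemma tagged_division_of_choose_tags:
  assumes "d division_of S" "\<forall>K\<in>d. \<tau> K \<in> K"
  shows "(\<lambda>K. (\<tau> K, K)) ` d tagged_division_of S"
proof (rule tagged_division_ofI)
  show "finite ((\<lambda>K. (\<tau> K, K)) ` d)" using assms(1) by auto
next
  fix x K assume "(x, K) \<in> (\<lambda>K. (\<tau> K, K)) ` d"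
  then have "K \<in> d" "x = \<tau> K" by auto
  then show "x \<in> K" "K \<subseteq> S" "\<exists>a b. K = cbox a b" using assms by auto
next
  fix x1 K1 x2 K2
  assume "(x1, K1) \<in> (\<lambda>K. (\<tau> K, K)) ` d" "(x2, K2) \<in> (\<lambda>K. (\<tau> K, K)) ` d" "(x1, K1) \<noteq> (x2, K2)"
  then show "interior K1 \<inter> interior K2 = {}" using assms(1) by (auto dest: division_ofD(5))
next
  show "\<Union> {K. \<exists>x. (x, K) \<in> (\<lambda>K. (\<tau> K, K)) ` d} = S"
    using assms(1) by (auto simp: division_of_def)
qed

lemma riemann_integrable_on_tag_variation:
  assumes "riemann_integrable_on g a b" "\<epsilon> > 0"
  obtains d where "d division_of {a..b}"
    "\<And>\<tau> \<tau>'. \<forall>K\<in>d. \<tau> K \<in> K \<Longrightarrow> \<forall>K\<in>d. \<tau>' K \<in> K \<Longrightarrow>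
       \<bar>\<Sum>K\<in>d. measure lborel K * (g (\<tau> K) - g (\<tau>' K))\<bar> < \<epsilon>"
proof -
  obtain I \<delta> where "\<delta> > 0" and riemann: "\<And>D. D tagged_division_of {a..b} \<Longrightarrow>
      \<forall>(x, K)\<in>D. measure lborel K < \<delta> \<Longrightarrow> \<bar>(\<Sum>(x, K)\<in>D. measure lborel K * g x) - I\<bar> < \<epsilon> / 2"
    using assms unfolding riemann_integrable_on_def by (metis half_gt_zero)
  obtain d where d: "d division_of {a..b}" "\<forall>K\<in>d. measure lborel K < \<delta>"
    using division_of_small_content_exists[OF \<open>\<delta> > 0\<close>] by blast
  have close: "\<bar>(\<Sum>K\<in>d. measure lborel K * g (\<tau> K)) - I\<bar> < \<epsilon> / 2" if "\<forall>K\<in>d. \<tau> K \<in> K" for \<tau>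
    using riemann[OF tagged_division_of_choose_tags[OF d(1) that]] d(2)
    by (simp add: sum.reindex inj_on_def)
  show ?thesis
  proof (rule that[OF d(1)])
    fix \<tau> \<tau>' assume "\<forall>K\<in>d. \<tau> K \<in> K" "\<forall>K\<in>d. \<tau>' K \<in> K"
    from close[OF this(1)] close[OF this(2)]
    show "\<bar>\<Sum>K\<in>d. measure lborel K * (g (\<tau> K) - g (\<tau>' K))\<bar> < \<epsilon>"
      by (simp add: right_diff_distrib sum_subtractf) (smt (verit))
  qed
qed

lemma measure_le_sum_meeting_pieces:
  assumes "d division_of S" "A \<in> sets borel" "A \<subseteq> S"
  shows "measure lborel A \<le> (\<Sum>K\<in>d. if 0 < measure lborel (K \<inter> A) then measure lborel K else 0)"
proof -
  have "K \<inter> A \<in> sets lborel" if "K \<in> d" for K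
    using division_ofD(4)[OF assms(1) that] assms(2) by auto
  moreover have "A = (\<Union>K\<in>d. K \<inter> A)" using assms(1,3) by auto
  ultimately have "measure lborel A \<le> (\<Sum>K\<in>d. measure lborel (K \<inter> A))"
    using measure_UNION_le[of d "\<lambda>K. K \<inter> A" lborel] assms(1) by auto
  also have "\<dots> \<le> (\<Sum>K\<in>d. if 0 < measure lborel (K \<inter> A) then measure lborel K else 0)"
  proof (rule sum_mono)
    fix K assume "K \<in> d"
    then obtain u v where "K = cbox u v" using assms(1) by blast
    then have "measure lborel (K \<inter> A) \<le> measure lborel K"
      using assms(2) by (intro measure_mono_fmeasurable) auto
    then show "measure lborel (K \<inter> A) \<le> (if 0 < measure lborel (K \<inter> A) then measure lborel K else 0)"
      by simp
  qed
  finally show ?thesis .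
qed

lemma measure_le_weighted_sum_pieces:
  assumes "d division_of S" "A \<in> sets borel" "A \<subseteq> S" "m \<ge> 0"
    and "\<And>K. K \<in> d \<Longrightarrow> 0 \<le> h K"
    and "\<And>K. K \<in> d \<Longrightarrow> 0 < measure lborel (K \<inter> A) \<Longrightarrow> m \<le> h K"
  shows "measure lborel A * m \<le> (\<Sum>K\<in>d. measure lborel K * h K)"
proof -
  have "measure lborel A * m \<le> (\<Sum>K\<in>d. if 0 < measure lborel (K \<inter> A) then measure lborel K else 0) * m"
    using measure_le_sum_meeting_pieces[OF assms(1-3)] assms(4) by (rule mult_right_mono)
  also have "\<dots> \<le> (\<Sum>K\<in>d. measure lborel K * h K)"
    unfolding sum_distrib_right
    using assms(5,6) by (intro sum_mono) (auto intro: mult_left_mono)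
  finally show ?thesis .
qed

lemma oscillation_points_in_piece:
  fixes F g :: "real \<Rightarrow> real"
  assumes d: "d division_of {a..b}" "K \<in> d" and "0 < measure lborel (K \<inter> A)"
    and "A \<in> sets borel" "A \<subseteq> {a..b}"
    and high: "\<forall>t\<in>A. m \<le> \<sigma> * F t"
    and low: "\<And>u v. a \<le> u \<Longrightarrow> u < v \<Longrightarrow> v \<le> b \<Longrightarrow>
      \<exists>E\<in>sets borel. E \<subseteq> {u..v} \<and> measure lborel E > 0 \<and> (\<forall>t\<in>E. \<sigma> * F t \<le> m')"
    and ae: "AE x in lebesgue_on {a..b}. F x = g x"
  obtains t t' where "t \<in> K" "t' \<in> K" "m \<le> \<sigma> * g t" "\<sigma> * g t' \<le> m'"
proof -
  obtain u v where uv: "K = {u..v}" using division_ofD(4)[OF d] by auto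
  have "measure lborel (K \<inter> A) \<le> measure lborel K"
    using uv assms(4) fmeasurable_cbox[of u v] by (intro measure_mono_fmeasurable) auto
  then have "u < v" using assms(3) uv by (auto split: if_splits)
  moreover have "K \<subseteq> {a..b}" using division_ofD(2)[OF d] .
  ultimately have "a \<le> u" "v \<le> b" using uv by auto
  obtain t where t: "t \<in> K \<inter> A" "F t = g t"
    using AE_lebesgue_on_obtain_in[OF ae _ _ _ assms(3)] uv assms(4,5) by auto
  obtain E where E: "E \<in> sets borel" "E \<subseteq> {u..v}" "measure lborel E > 0" "\<forall>t\<in>E. \<sigma> * F t \<le> m'"
    using low[OF \<open>a \<le> u\<close> \<open>u < v\<close> \<open>v \<le> b\<close>] by blast
  have "E \<subseteq> {a..b}" using E(2) \<open>a \<le> u\<close> \<open>v \<le> b\<close> by auto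
  then obtain t' where t': "t' \<in> E" "F t' = g t'"
    using AE_lebesgue_on_obtain_in[OF ae _ E(1) _ E(3)] by auto
  have "m \<le> \<sigma> * g t" "\<sigma> * g t' \<le> m'" using t t' E(4) high by auto
  then show ?thesis using that t(1) t'(1) E(2) uv by blast
qed

lemma not_riemann_integrable_on_if_oscillating:
  fixes F g :: "real \<Rightarrow> real"
  assumes "A \<in> sets borel" "A \<subseteq> {a..b}" "measure lborel A > 0"
    and "m > 0" "\<bar>\<sigma>\<bar> = 1"
    and high: "\<forall>t\<in>A. m \<le> \<sigma> * F t"
    and low: "\<And>u v. a \<le> u \<Longrightarrow> u < v \<Longrightarrow> v \<le> b \<Longrightarrow>
      \<exists>E\<in>sets borel. E \<subseteq> {u..v} \<and> measure lborel E > 0 \<and> (\<forall>t\<in>E. \<sigma> * F t \<le> m / 2)"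
    and ae: "AE x in lebesgue_on {a..b}. F x = g x"
  shows "\<not> riemann_integrable_on g a b"
proof
  assume "riemann_integrable_on g a b"
  define \<epsilon> where "\<epsilon> = measure lborel A * (m / 2)"
  have "\<epsilon> > 0" using assms(3,4) by (simp add: \<epsilon>_def)
  obtain d where d: "d division_of {a..b}" and variation: "\<And>\<tau> \<tau>'. \<forall>K\<in>d. \<tau> K \<in> K \<Longrightarrow>
      \<forall>K\<in>d. \<tau>' K \<in> K \<Longrightarrow> \<bar>\<Sum>K\<in>d. measure lborel K * (g (\<tau> K) - g (\<tau>' K))\<bar> < \<epsilon>"
    using riemann_integrable_on_tag_variation[OF \<open>riemann_integrable_on g a b\<close> \<open>\<epsilon> > 0\<close>] by blast
  define good where "good K p \<longleftrightarrow> fst p \<in> K \<and> snd p \<in> K \<and>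
      (if 0 < measure lborel (K \<inter> A) then m / 2 \<le> \<sigma> * (g (fst p) - g (snd p)) else snd p = fst p)"
    for K p
  have "\<forall>K\<in>d. \<exists>p. good K p"
  proof
    fix K assume K: "K \<in> d"
    show "\<exists>p. good K p"
    proof (cases "0 < measure lborel (K \<inter> A)")
      case True
      then obtain t t' where "t \<in> K" "t' \<in> K" "m \<le> \<sigma> * g t" "\<sigma> * g t' \<le> m / 2"
        using oscillation_points_in_piece[OF d K True assms(1,2) high low ae] by blast
      then have "good K (t, t')" using True by (simp add: good_def right_diff_distrib)
      then show ?thesis ..
    next
      case False
      obtain t where "t \<in> K" using division_ofD(3)[OF d K] by blast
      then have "good K (t, t)" using False by (simp add: good_def)
      then show ?thesis ..
    qed
  qed
  then have "\<exists>\<pi>. \<forall>K\<in>d. good K (\<pi> K)" by (rule bchoice)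
  then obtain \<pi> where \<pi>: "\<forall>K\<in>d. good K (\<pi> K)" ..
  have "\<epsilon> \<le> (\<Sum>K\<in>d. measure lborel K * (\<sigma> * (g (fst (\<pi> K)) - g (snd (\<pi> K)))))"
    unfolding \<epsilon>_def using \<pi> assms(4)
    by (intro measure_le_weighted_sum_pieces[OF d assms(1,2)]) (auto simp: good_def split: if_splits)
  also have "\<dots> = \<sigma> * (\<Sum>K\<in>d. measure lborel K * (g (fst (\<pi> K)) - g (snd (\<pi> K))))"
    by (simp add: sum_distrib_left mult.left_commute)
  also have "\<dots> \<le> \<bar>\<Sum>K\<in>d. measure lborel K * (g (fst (\<pi> K)) - g (snd (\<pi> K)))\<bar>"
    using abs_ge_self[of "\<sigma> * _"] assms(5) by (simp add: abs_mult)
  also have "\<dots> < \<epsilon>" using \<pi> by (intro variation) (auto simp: good_def)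
  finally show False by simp
qed

section \<open>Scaled distance to an enumeration of the rationals\<close>

definition rat_enum :: "nat \<Rightarrow> real" where
  "rat_enum = from_nat_into \<rat>"

definition rat_dist :: "real \<Rightarrow> real" where
  "rat_dist t = (INF k. 2 ^ k * \<bar>t - rat_enum k\<bar>)"

lemma rat_enum_dense:
  assumes "a < b" obtains k where "a < rat_enum k" "rat_enum k < b"
proof -
  obtain r where r: "r \<in> \<rat>" "a < r" "r < b" using Rats_dense_in_real[OF assms] by blast
  then obtain k where "rat_enum k = r"
    using from_nat_into_surj[OF countable_rat] by (metis rat_enum_def)
  then show ?thesis using that r by blast
qed

lemma bdd_below_rat_dist: "bdd_below (range (\<lambda>k. 2 ^ k * \<bar>t - rat_enum k\<bar>))"
  by (rule bdd_belowI[of _ 0]) auto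

lemma rat_dist_nonneg: "0 \<le> rat_dist t"
  unfolding rat_dist_def by (rule cINF_greatest) auto

lemma rat_dist_le: "rat_dist t \<le> 2 ^ k * \<bar>t - rat_enum k\<bar>"
  unfolding rat_dist_def by (rule cINF_lower[OF bdd_below_rat_dist]) simp

lemma rat_dist_less_iff: "rat_dist t < s \<longleftrightarrow> (\<exists>k. 2 ^ k * \<bar>t - rat_enum k\<bar> < s)"
  unfolding rat_dist_def by (simp add: cINF_less_iff[OF UNIV_not_empty bdd_below_rat_dist])

lemma rat_dist_less_eq_UN:
  "{t. rat_dist t < s} = (\<Union>k. {rat_enum k - s / 2 ^ k <..< rat_enum k + s / 2 ^ k})"
proof -
  have "2 ^ k * \<bar>t - q\<bar> < s \<longleftrightarrow> t \<in> {q - s / 2 ^ k <..< q + s / 2 ^ k}" for k and t q :: real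
    by (simp add: pos_less_divide_eq[symmetric] mult.commute abs_less_iff) linarith
  then show ?thesis by (auto simp: rat_dist_less_iff)
qed

lemma borel_measurable_rat_dist [measurable]: "rat_dist \<in> borel_measurable borel"
proof -
  have "open {t. rat_dist t < s}" for s
    by (auto simp: rat_dist_less_eq_UN)
  then show ?thesis by (simp add: borel_measurable_iff_less)
qed

lemma emeasure_rat_dist_less:
  assumes "s > 0"
  shows "emeasure lborel {t. rat_dist t < s} \<le> ennreal (4 * s)"
proof -
  have geometric: "(\<lambda>k. 2 * s * (1/2) ^ k) sums (4 * s)"
    using sums_mult[OF geometric_sums[of "1/2::real"], of "2 * s"] by simp
  have "emeasure lborel {t. rat_dist t < s}
      \<le> (\<Sum>k. emeasure lborel {rat_enum k - s / 2 ^ k <..< rat_enum k + s / 2 ^ k})"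
    unfolding rat_dist_less_eq_UN by (rule emeasure_subadditive_countably) auto
  also have "\<dots> = (\<Sum>k. ennreal (2 * s * (1/2) ^ k))"
    using assms by (simp add: power_one_over)
  also have "\<dots> = ennreal (4 * s)"
    using geometric assms by (simp add: suminf_ennreal2 sums_iff)
  finally show ?thesis .
qed

lemma measure_rat_dist_ge:
  assumes "c < d" "s > 0"
  shows "(d - c) - 4 * s \<le> measure lborel ({c<..<d} \<inter> {t. s \<le> rat_dist t})"
proof -
  let ?low = "{c<..<d} \<inter> {t. rat_dist t < s}" and ?high = "{c<..<d} \<inter> {t. s \<le> rat_dist t}"
  have "emeasure lborel ?low \<le> emeasure lborel {t. rat_dist t < s}"
    by (intro emeasure_mono) auto
  also have "\<dots> \<le> ennreal (4 * s)" by (rule emeasure_rat_dist_less[OF assms(2)])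
  finally have "measure lborel ?low \<le> 4 * s"
    unfolding measure_def using assms(2) by (intro enn2real_leI) auto
  moreover have "?high \<union> ?low = {c<..<d}" by auto
  then have "d - c \<le> measure lborel ?high + measure lborel ?low"
    using assms(1) measure_Un_le[of ?high lborel ?low] by simp
  ultimately show ?thesis by linarith
qed

lemma rat_dist_small_on_subinterval:
  assumes "u < v" "r > 0"
  obtains c d where "u \<le> c" "c < d" "d \<le> v" "\<forall>t\<in>{c<..<d}. rat_dist t < r"
proof -
  obtain k where k: "u < rat_enum k" "rat_enum k < v" using rat_enum_dense[OF assms(1)] .
  define w where "w = min (min (rat_enum k - u) (v - rat_enum k)) (r / 2 ^ k)"
  have "w > 0" using k assms(2) by (simp add: w_def)
  have "rat_dist t < r" if "t \<in> {rat_enum k - w <..< rat_enum k + w}" for t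
  proof -
    have "2 ^ k * \<bar>t - rat_enum k\<bar> < 2 ^ k * w" using that by (simp add: abs_less_iff)
    also have "\<dots> \<le> 2 ^ k * (r / 2 ^ k)" by (intro mult_left_mono) (simp_all add: w_def)
    also have "\<dots> = r" by simp
    finally show ?thesis using rat_dist_le[of t k] by linarith
  qed
  moreover have "u \<le> rat_enum k - w" "rat_enum k + w \<le> v" by (simp_all add: w_def)
  ultimately show ?thesis
    using that[of "rat_enum k - w" "rat_enum k + w"] \<open>w > 0\<close> by auto
qed

section \<open>Compositions with the scaled distance\<close>

lemma continuous_on_nonzero_signed_lower_bound:
  fixes \<Phi> :: "real \<Rightarrow> real"
  assumes "s \<le> r" "continuous_on {s..r} \<Phi>" "\<forall>x\<in>{s..r}. \<Phi> x \<noteq> 0"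
  obtains m \<sigma> where "m > 0" "\<bar>\<sigma>\<bar> = 1" "\<forall>x\<in>{s..r}. m \<le> \<sigma> * \<Phi> x"
proof -
  have interval: "is_interval (\<Phi> ` {s..r})"
    unfolding is_interval_connected_1 by (rule connected_continuous_image[OF assms(2)]) simp
  have same_sign: "sgn (\<Phi> x) = sgn (\<Phi> s)" if x: "x \<in> {s..r}" for x
  proof (rule ccontr)
    assume "sgn (\<Phi> x) \<noteq> sgn (\<Phi> s)"
    moreover have "\<Phi> x \<noteq> 0" "\<Phi> s \<noteq> 0" using assms(1,3) x by auto
    ultimately have "min (\<Phi> x) (\<Phi> s) \<le> 0 \<and> 0 \<le> max (\<Phi> x) (\<Phi> s)"
      by (auto simp: sgn_if split: if_splits)
    moreover have "min (\<Phi> x) (\<Phi> s) \<in> \<Phi> ` {s..r}" "max (\<Phi> x) (\<Phi> s) \<in> \<Phi> ` {s..r}"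
      using x assms(1) by (auto simp: min_def max_def)
    ultimately have "0 \<in> \<Phi> ` {s..r}" using interval unfolding is_interval_1 by blast
    then show False using assms(3) by auto
  qed
  obtain x0 where x0: "x0 \<in> {s..r}" "\<forall>x\<in>{s..r}. \<bar>\<Phi> x0\<bar> \<le> \<bar>\<Phi> x\<bar>"
    using continuous_attains_inf[OF compact_Icc _ continuous_on_rabs[OF assms(2)]] assms(1) by auto
  have "\<bar>\<Phi> x0\<bar> \<le> sgn (\<Phi> s) * \<Phi> x" if "x \<in> {s..r}" for x
  proof -
    have "sgn (\<Phi> s) * \<Phi> x = \<bar>\<Phi> x\<bar>" using same_sign[OF that] by (simp add: abs_sgn mult.commute)
    then show ?thesis using x0(2) that by auto
  qed
  moreover have "\<bar>\<Phi> x0\<bar> > 0" "\<bar>sgn (\<Phi> s)\<bar> = 1" using x0(1) assms by auto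
  ultimately show ?thesis using that by blast
qed

lemma rat_dist_between_on_positive_set:
  assumes "a < b" "r > 0"
  obtains A s where "A \<in> sets borel" "A \<subseteq> {a..b}" "0 < measure lborel A" "0 < s"
    "\<forall>t\<in>A. s \<le> rat_dist t \<and> rat_dist t < r"
proof -
  obtain c d where cd: "a \<le> c" "c < d" "d \<le> b" "\<forall>t\<in>{c<..<d}. rat_dist t < r"
    using rat_dist_small_on_subinterval[OF assms] .
  define s where "s = (d - c) / 8"
  define A where "A = {c<..<d} \<inter> {t. s \<le> rat_dist t}"
  have "0 < (d - c) / 2" using cd(2) by simp
  also have "\<dots> = (d - c) - 4 * s" by (simp add: s_def field_simps)
  also have "\<dots> \<le> measure lborel A"
    unfolding A_def using cd(2) by (intro measure_rat_dist_ge) (auto simp: s_def)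
  finally have "0 < measure lborel A" .
  moreover have "A \<in> sets borel" unfolding A_def by measurable
  moreover have "A \<subseteq> {a..b}" using cd(1,3) by (auto simp: A_def)
  moreover have "0 < s" using cd(2) by (simp add: s_def)
  moreover have "\<forall>t\<in>A. s \<le> rat_dist t \<and> rat_dist t < r" using cd(4) by (auto simp: A_def)
  ultimately show ?thesis using that by blast
qed

lemma comp_rat_dist_bounded_away:
  fixes \<Phi> :: "real \<Rightarrow> real"
  assumes "continuous_on {0..} \<Phi>" "eventually (\<lambda>r. \<Phi> r \<noteq> 0) (at_right 0)" "a < b"
  obtains A m \<sigma> where "A \<in> sets borel" "A \<subseteq> {a..b}" "0 < measure lborel A" "0 < m" "\<bar>\<sigma>\<bar> = 1"
    "\<forall>t\<in>A. m \<le> \<sigma> * \<Phi> (rat_dist t)"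
proof -
  obtain r where "r > 0" and nonzero: "\<forall>x. 0 < x \<longrightarrow> x < r \<longrightarrow> \<Phi> x \<noteq> 0"
    using assms(2) by (auto simp: eventually_at_right_field)
  obtain A s where A: "A \<in> sets borel" "A \<subseteq> {a..b}" "0 < measure lborel A" "0 < s"
    and between: "\<forall>t\<in>A. s \<le> rat_dist t \<and> rat_dist t < r / 2"
    using rat_dist_between_on_positive_set[OF assms(3), of "r / 2"] \<open>r > 0\<close> by auto
  obtain t where "t \<in> A" using A(3) by (metis ex_in_conv measure_empty less_irrefl)
  then have "s \<le> r / 2" using between by fastforce
  moreover have "continuous_on {s..r / 2} \<Phi>" using A(4) by (intro continuous_on_subset[OF assms(1)]) auto
  moreover have "\<forall>x\<in>{s..r / 2}. \<Phi> x \<noteq> 0" using nonzero A(4) \<open>r > 0\<close> by auto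
  ultimately obtain m \<sigma> where "m > 0" "\<bar>\<sigma>\<bar> = 1" "\<forall>x\<in>{s..r / 2}. m \<le> \<sigma> * \<Phi> x"
    by (rule continuous_on_nonzero_signed_lower_bound)
  then show ?thesis using that[OF A(1-3)] between by fastforce
qed

lemma comp_rat_dist_small_on_positive_set:
  fixes \<Phi> :: "real \<Rightarrow> real"
  assumes "continuous_on {0..} \<Phi>" "\<Phi> 0 = 0" "\<eta> > 0" "u < v"
  obtains E where "E \<in> sets borel" "E \<subseteq> {u..v}" "0 < measure lborel E" "\<forall>t\<in>E. \<bar>\<Phi> (rat_dist t)\<bar> < \<eta>"
proof -
  obtain \<delta> where "\<delta> > 0" and "\<forall>r\<in>{0..}. dist r 0 < \<delta> \<longrightarrow> dist (\<Phi> r) (\<Phi> 0) < \<eta>"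
    using assms(1)[unfolded continuous_on_iff, rule_format, of 0 \<eta>] assms(3) by auto
  then have small: "\<bar>\<Phi> r\<bar> < \<eta>" if "0 \<le> r" "r < \<delta>" for r
    using that assms(2) by (simp add: dist_real_def)
  obtain c d where cd: "u \<le> c" "c < d" "d \<le> v" "\<forall>t\<in>{c<..<d}. rat_dist t < \<delta>"
    using rat_dist_small_on_subinterval[OF assms(4) \<open>\<delta> > 0\<close>] .
  moreover have "{c<..<d} \<subseteq> {u..v}" using cd(1,3) by auto
  ultimately show ?thesis
    using that[of "{c<..<d}"] small[OF rat_dist_nonneg] by simp
qed

lemma integrable_comp_rat_dist:
  fixes \<Phi> :: "real \<Rightarrow> real"
  assumes "continuous_on {0..} \<Phi>" "\<forall>r\<ge>0. \<bar>\<Phi> r\<bar> \<le> B"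
  shows "integrable (lebesgue_on {0..1}) (\<lambda>t. \<Phi> (rat_dist t))"
proof -
  have "continuous_on UNIV (\<lambda>x. \<Phi> (max 0 x))"
    by (rule continuous_on_compose2[OF assms(1)]) (auto intro: continuous_intros)
  then have "(\<lambda>t. \<Phi> (max 0 (rat_dist t))) \<in> borel_measurable borel"
    by (intro measurable_compose[OF borel_measurable_rat_dist] borel_measurable_continuous_onI)
  then have "(\<lambda>t. \<Phi> (rat_dist t)) \<in> borel_measurable (lebesgue_on {0..1})"
    by (intro measurable_restrict_space1 measurable_completion) (simp add: rat_dist_nonneg)
  moreover have "finite_measure (lebesgue_on {0..1::real})"
    by (rule finite_measure_lebesgue_on) (metis cbox_interval lmeasurable_cbox)
  ultimately show ?thesis
    using assms(2) rat_dist_nonneg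
    by (intro finite_measure.integrable_const_bound[where B=B]) (auto intro!: AE_I2)
qed

lemma comp_rat_dist_nowhere_riemann:
  fixes \<Phi> :: "real \<Rightarrow> real"
  assumes cont: "continuous_on {0..} \<Phi>" and "\<Phi> 0 = 0"
    and nonzero: "eventually (\<lambda>r. \<Phi> r \<noteq> 0) (at_right 0)" and "\<forall>r\<ge>0. \<bar>\<Phi> r\<bar> \<le> B"
  shows "(\<lambda>t. \<Phi> (rat_dist t)) \<in> nowhere_riemann_L1"
    and "\<not> (AE t in lebesgue_on {0..1}. \<Phi> (rat_dist t) = 0)"
proof -
  have "\<not> riemann_integrable_on g a b" if "a < b" "AE x in lebesgue_on {a..b}. \<Phi> (rat_dist x) = g x"
    for a b g
  proof -
    obtain A m \<sigma> where A: "A \<in> sets borel" "A \<subseteq> {a..b}" "0 < measure lborel A" "0 < m" "\<bar>\<sigma>\<bar> = 1"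
      "\<forall>t\<in>A. m \<le> \<sigma> * \<Phi> (rat_dist t)"
      using comp_rat_dist_bounded_away[OF cont nonzero \<open>a < b\<close>] by blast
    have "\<sigma> * x \<le> \<bar>x\<bar>" for x using abs_ge_self[of "\<sigma> * x"] A(5) by (simp add: abs_mult)
    then have "\<exists>E\<in>sets borel. E \<subseteq> {u..v} \<and> measure lborel E > 0 \<and> (\<forall>t\<in>E. \<sigma> * \<Phi> (rat_dist t) \<le> m / 2)"
      if "u < v" for u v
      using comp_rat_dist_small_on_positive_set[OF cont \<open>\<Phi> 0 = 0\<close> _ \<open>u < v\<close>, of "m / 2"] A(4)
      by (smt (verit, best) half_gt_zero)
    then show ?thesis
      using not_riemann_integrable_on_if_oscillating[OF A _ that(2)] by blast
  qed
  moreover have "\<not> (AE t in lebesgue_on {0..1}. \<Phi> (rat_dist t) = 0)"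
  proof
    assume zero: "AE t in lebesgue_on {0..1}. \<Phi> (rat_dist t) = 0"
    obtain A m \<sigma> where A: "A \<in> sets borel" "A \<subseteq> {0..1}" "0 < measure lborel A" "0 < m"
      "\<bar>\<sigma>\<bar> = 1" "\<forall>t\<in>A. m \<le> \<sigma> * \<Phi> (rat_dist t)"
      using comp_rat_dist_bounded_away[OF cont nonzero zero_less_one] by blast
    then obtain t where "t \<in> A" "\<Phi> (rat_dist t) = 0"
      using AE_lebesgue_on_obtain_in[OF zero _ A(1-3)] by auto
    then show False using A(4,6) by auto
  qed
  ultimately show "(\<lambda>t. \<Phi> (rat_dist t)) \<in> nowhere_riemann_L1"
    and "\<not> (AE t in lebesgue_on {0..1}. \<Phi> (rat_dist t) = 0)"
    using integrable_comp_rat_dist[OF cont assms(4)] by (auto simp: nowhere_riemann_L1_def)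
qed

theorem mainTheorem4:
  shows "strongly_c_algebrable_ae nowhere_riemann_L1"
  unfolding strongly_c_algebrable_ae_def
proof (intro exI[of _ "\<lambda>\<alpha> t. exp_flat (exp \<alpha>) (rat_dist t)"] allI impI)
  fix n and \<alpha>s :: "real list" and M c
  assume "length \<alpha>s = n \<and> distinct \<alpha>s \<and> nonconst_poly n M c"
  moreover define bs where "bs = map exp \<alpha>s"
  ultimately have bs: "distinct bs" "\<forall>b\<in>set bs. b > 0" and M: "finite M" "\<exists>e\<in>M. c e \<noteq> 0"
    "\<forall>e\<in>M. e \<noteq> (\<lambda>_. 0) \<and> (\<forall>i\<ge>length bs. e i = 0)"
    by (auto simp: nonconst_poly_def distinct_map inj_on_def)
  have "continuous_on {0..} (flat_poly bs M c)"
    using continuous_on_flat_poly[OF bs(2)] by (rule continuous_on_subset) simp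
  moreover have "eventually (\<lambda>r. flat_poly bs M c r \<noteq> 0) (at_right 0)"
    using M by (intro eventually_flat_poly_nonzero[OF bs]) auto
  moreover have "\<forall>r\<ge>0. \<bar>flat_poly bs M c r\<bar> \<le> (\<Sum>e\<in>M. \<bar>c e\<bar>)"
    by (simp add: abs_flat_poly_le)
  ultimately have "(\<lambda>t. flat_poly bs M c (rat_dist t)) \<in> nowhere_riemann_L1 \<and>
      \<not> (AE t in lebesgue_on {0..1}. flat_poly bs M c (rat_dist t) = 0)"
    using comp_rat_dist_nowhere_riemann flat_poly_0[OF M(3)] by blast
  moreover have "mpoly_eval M c (map (\<lambda>\<alpha>. exp_flat (exp \<alpha>) (rat_dist t)) \<alpha>s)
      = flat_poly bs M c (rat_dist t)" for t
    by (simp add: flat_poly_def bs_def comp_def)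
  ultimately show "\<not> (AE t in lebesgue_on {0..1}.
        mpoly_eval M c (map (\<lambda>\<alpha>. exp_flat (exp \<alpha>) (rat_dist t)) \<alpha>s) = 0) \<and>
      (\<lambda>t. mpoly_eval M c (map (\<lambda>\<alpha>. exp_flat (exp \<alpha>) (rat_dist t)) \<alpha>s)) \<in> nowhere_riemann_L1"
    by simp
qed

end
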